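(* Let $A\subseteq\mathbb R^n$ be nonempty with out-radius at most $1$, and let $r\ge 0$ be such that the Euclidean ball $B(0,r)$ has the same volume as the convex hull $\mathrm{conv}(A)$. Then $\mathrm{Vol}(A^c)\le \mathrm{Vol}(B(0,1-r))=(1-r)^n\kappa_n$.
   Context: For $x\in\mathbb R^n$, $B(x,\rho)$ denotes the closed Euclidean ball of radius $\rho$ centered at $x$, and $\kappa_n$ is the volume of the Euclidean unit ball. For $A\subseteq\mathbb R^n$, $A^c=\bigcap_{x\in A}B(x,1)$. The out-radius of $A$ is the radius of the smallest closed Euclidean ball containing $A$. *)

theory Defs
  imports "HOL-Analysis.Analysis"
begin

text \<open>The set A^c: intersection of all closed unit balls centred at points of A.\<close>
definition unit_ball_hull :: "'a::euclidean_space set \<Rightarrow> 'a set" where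
  "unit_ball_hull A = (\<Inter>x\<in>A. cball x 1)"

definition outradius :: "'a::euclidean_space set \<Rightarrow> real" where
  "outradius A = Inf {\<rho>. \<exists>x. A \<subseteq> cball x \<rho>}"

end

theory Submission
  imports Defs
begin

text \<open>
  Every point of \<open>A\<^sup>c\<close> lies within distance 1 of every point of \<open>conv A\<close>, so
  \<open>A\<^sup>c + (-conv A) \<subseteq> B(0, 1)\<close>. The Brunn--Minkowski inequality
  \<open>Vol(K)^(1/n) + Vol(L)^(1/n) \<le> Vol(K + L)^(1/n)\<close> then turns \<open>Vol(-conv A) = r\<^sup>n \<kappa>\<^sub>n\<close>
  into \<open>Vol(A\<^sup>c)^(1/n) \<le> (1 - r) \<kappa>\<^sub>n^(1/n)\<close>; the out-radius bound only ensures \<open>r \<le> 1\<close>.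

  Brunn--Minkowski is proved as by Hadwiger and Ohmann. For two boxes it is the AM--GM
  inequality. For two finite unions of almost disjoint boxes, cut the first by a coordinate
  hyperplane separating two of its boxes and the second by a parallel hyperplane splitting its
  volume in the same ratio; the halves have fewer boxes, and their Minkowski sums lie on
  opposite sides of a hyperplane. Bounded open sets are exhausted by such unions, and a convex
  body has the same volume as its interior.
\<close>

section \<open>Minkowski sums and Lebesgue measure\<close>

lemma compact_set_plus:
  fixes S T :: "'a::real_normed_vector set"
  assumes "compact S" "compact T"
  shows "compact (S + T)"
proof -
  have "S + T = {x + y | x y. x \<in> S \<and> y \<in> T}"
    by (auto simp: set_plus_def)
  then show ?thesis
    using compact_sums[OF assms] by simp
qed

lemma open_set_plus:
  fixes S T :: "'a::real_normed_vector set"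
  assumes "open S"
  shows "open (S + T)"
proof -
  have "S + T = (\<Union>x\<in>S. \<Union>y\<in>T. {x + y})"
    by (auto simp: set_plus_def)
  then show ?thesis
    using open_sums assms by metis
qed

lemma bounded_set_plus:
  fixes S T :: "'a::real_normed_vector set"
  assumes "bounded S" "bounded T"
  shows "bounded (S + T)"
  using bounded_plus[OF assms] by (simp add: set_plus_image)

lemma set_plus_subset_halfspace_le:
  assumes "S \<subseteq> {x. x \<bullet> k \<le> c}" "T \<subseteq> {x. x \<bullet> k \<le> d}"
  shows "S + T \<subseteq> {x. x \<bullet> k \<le> c + d}"
  using assms by (fastforce simp: set_plus_def inner_add_left subset_iff intro: add_mono)

lemma set_plus_subset_halfspace_ge:
  assumes "S \<subseteq> {x. x \<bullet> k \<ge> c}" "T \<subseteq> {x. x \<bullet> k \<ge> d}"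
  shows "S + T \<subseteq> {x. x \<bullet> k \<ge> c + d}"
  using assms by (fastforce simp: set_plus_def inner_add_left subset_iff intro: add_mono)

lemma measure_le_set_plus:
  assumes "x \<in> S" "T \<in> lmeasurable" "S + T \<in> lmeasurable"
  shows "measure lebesgue T \<le> measure lebesgue (S + T)"
proof -
  have "(+) x ` T \<subseteq> S + T"
    using assms(1) by (auto simp: set_plus_def)
  then have "measure lebesgue ((+) x ` T) \<le> measure lebesgue (S + T)"
    using assms(2,3) by (intro measure_mono_fmeasurable) (auto simp: fmeasurableD measurable_translation)
  then show ?thesis
    by (simp add: measure_translation)
qed

lemma measure_open_pos:
  assumes "open S" "bounded S" "S \<noteq> {}"
  shows "0 < measure lebesgue S"
  using open_not_negligible[OF assms(1,3)] negligible_iff_measure0[OF lmeasurable_open[OF assms(2,1)]]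
  by (simp add: zero_less_measure_iff)

lemma measure_Un_negligible_Int:
  assumes "S \<in> lmeasurable" "T \<in> lmeasurable" "negligible (S \<inter> T)"
  shows "measure lebesgue (S \<union> T) = measure lebesgue S + measure lebesgue T"
  using measure_Un3[OF assms(1,2)] negligible_imp_measure0[OF assms(3)] by simp

lemma measure_split_halfspace:
  assumes "S \<in> lmeasurable" "k \<in> Basis"
  shows "measure lebesgue S
    = measure lebesgue (S \<inter> {x. x \<bullet> k \<le> c}) + measure lebesgue (S \<inter> {x. x \<bullet> k \<ge> c})"
proof -
  have "S \<inter> {x. x \<bullet> k \<le> c} \<in> lmeasurable" "S \<inter> {x. x \<bullet> k \<ge> c} \<in> lmeasurable"
    using assms(1) by (auto intro!: fmeasurable_Int_fmeasurable borel_closed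
        closed_halfspace_component_le closed_halfspace_component_ge)
  moreover have "negligible ((S \<inter> {x. x \<bullet> k \<le> c}) \<inter> (S \<inter> {x. x \<bullet> k \<ge> c}))"
    by (rule negligible_subset[OF negligible_standard_hyperplane[OF assms(2), of c]]) auto
  moreover have "(S \<inter> {x. x \<bullet> k \<le> c}) \<union> (S \<inter> {x. x \<bullet> k \<ge> c}) = S"
    by auto
  ultimately show ?thesis
    using measure_Un_negligible_Int by metis
qed

lemma measure_halfspaces_le:
  assumes "S \<in> lmeasurable" "T \<in> lmeasurable" "k \<in> Basis"
    and "S \<subseteq> {x. x \<bullet> k \<le> c}" "T \<subseteq> {x. x \<bullet> k \<ge> c}"
    and "S \<union> T \<subseteq> M" "M \<in> lmeasurable"
  shows "measure lebesgue S + measure lebesgue T \<le> measure lebesgue M"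
proof -
  have "negligible (S \<inter> T)"
    by (rule negligible_subset[OF negligible_standard_hyperplane[OF assms(3), of c]])
      (use assms(4,5) in force)
  then have "measure lebesgue S + measure lebesgue T = measure lebesgue (S \<union> T)"
    using measure_Un_negligible_Int assms(1,2) by metis
  also have "\<dots> \<le> measure lebesgue M"
    using assms by (intro measure_mono_fmeasurable) (auto simp: fmeasurableD)
  finally show ?thesis .
qed

lemma measure_set_plus_split_le:
  assumes "compact S" "compact T" "k \<in> Basis"
  shows "measure lebesgue (S \<inter> {x. x \<bullet> k \<le> c} + T \<inter> {x. x \<bullet> k \<le> t})
    + measure lebesgue (S \<inter> {x. x \<bullet> k \<ge> c} + T \<inter> {x. x \<bullet> k \<ge> t})
    \<le> measure lebesgue (S + T)"
proof (rule measure_halfspaces_le[OF _ _ assms(3)])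
  show "S \<inter> {x. x \<bullet> k \<le> c} + T \<inter> {x. x \<bullet> k \<le> t} \<subseteq> {x. x \<bullet> k \<le> c + t}"
    by (rule set_plus_subset_halfspace_le) auto
  show "S \<inter> {x. x \<bullet> k \<ge> c} + T \<inter> {x. x \<bullet> k \<ge> t} \<subseteq> {x. x \<bullet> k \<ge> c + t}"
    by (rule set_plus_subset_halfspace_ge) auto
  show "S \<inter> {x. x \<bullet> k \<le> c} + T \<inter> {x. x \<bullet> k \<le> t}
      \<union> (S \<inter> {x. x \<bullet> k \<ge> c} + T \<inter> {x. x \<bullet> k \<ge> t}) \<subseteq> S + T"
    by (intro Un_least set_plus_mono2) auto
qed (use assms in \<open>auto intro!: lmeasurable_compact compact_set_plus compact_Int_closed
      closed_halfspace_component_le closed_halfspace_component_ge\<close>)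

lemma interior_subset_standard_hyperplane:
  assumes "k \<in> Basis" "S \<subseteq> {x. x \<bullet> k = c}"
  shows "interior S = {}"
proof -
  have "interior S \<subseteq> interior {x. k \<bullet> x = c}"
    using assms(2) by (intro interior_mono) (auto simp: inner_commute)
  then show ?thesis
    using nonzero_Basis[OF assms(1)] by simp
qed

lemma measure_cbox_eq:
  "measure lebesgue (cbox a b) = (\<Prod>i\<in>Basis. max 0 (b \<bullet> i - a \<bullet> i))"
proof (cases "\<forall>i\<in>Basis. a \<bullet> i \<le> b \<bullet> i")
  case True
  then show ?thesis
    by (simp add: measure_completion measure_lborel_cbox_eq inner_diff_left cong: prod.cong)
next
  case False
  then obtain i where "i \<in> Basis" "b \<bullet> i < a \<bullet> i"
    by (auto simp: not_le)
  then show ?thesis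
    by (auto simp: measure_completion measure_lborel_cbox_eq intro!: prod_zero bexI[of _ i])
qed

lemma measure_cbox_eq_prod:
  "cbox a b \<noteq> {} \<Longrightarrow> measure lebesgue (cbox a b) = (\<Prod>i\<in>Basis. b \<bullet> i - a \<bullet> i)"
  by (auto simp: measure_cbox_eq box_ne_empty intro!: prod.cong)

lemma measure_cball_eq:
  assumes "0 \<le> \<rho>"
  shows "measure lebesgue (cball (x::'a::euclidean_space) \<rho>)
    = \<rho> ^ DIM('a) * measure lebesgue (cball (0::'a) 1)"
  using content_cball[OF assms, of x] content_cball[of 1 "0::'a"] by (simp add: measure_completion)

section \<open>Brunn--Minkowski for finite unions of boxes\<close>

lemma cbox_plus_cbox:
  fixes a b c d :: "'a::euclidean_space"
  assumes "cbox a b \<noteq> {}" "cbox c d \<noteq> {}"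
  shows "cbox a b + cbox c d = cbox (a + c) (b + d)"
proof
  show "cbox a b + cbox c d \<subseteq> cbox (a + c) (b + d)"
    by (auto simp: set_plus_def mem_box inner_add_left intro!: add_mono)
  show "cbox (a + c) (b + d) \<subseteq> cbox a b + cbox c d"
  proof
    fix z assume z: "z \<in> cbox (a + c) (b + d)"
    define x where "x = (\<Sum>i\<in>Basis. max (a \<bullet> i) (z \<bullet> i - d \<bullet> i) *\<^sub>R i)"
    have "a \<bullet> i \<le> x \<bullet> i \<and> x \<bullet> i \<le> b \<bullet> i \<and>
        c \<bullet> i \<le> (z - x) \<bullet> i \<and> (z - x) \<bullet> i \<le> d \<bullet> i" if i: "i \<in> Basis" for i
    proof -
      have "a \<bullet> i \<le> b \<bullet> i" "c \<bullet> i \<le> d \<bullet> i"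
        "a \<bullet> i + c \<bullet> i \<le> z \<bullet> i" "z \<bullet> i \<le> b \<bullet> i + d \<bullet> i"
        using assms z i by (auto simp: box_ne_empty mem_box inner_add_left)
      then show ?thesis
        using i by (simp add: x_def inner_diff_left max_def)
    qed
    then have "x \<in> cbox a b" "z - x \<in> cbox c d"
      by (simp_all add: mem_box)
    then show "z \<in> cbox a b + cbox c d"
      by (metis add.commute diff_add_cancel set_plus_intro)
  qed
qed

lemma root_prod_add_le:
  fixes x y :: "'i \<Rightarrow> real"
  assumes I: "finite I" "I \<noteq> {}"
    and pos: "\<And>i. i \<in> I \<Longrightarrow> 0 < x i" "\<And>i. i \<in> I \<Longrightarrow> 0 < y i"
  shows "root (card I) (\<Prod>i\<in>I. x i) + root (card I) (\<Prod>i\<in>I. y i)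
    \<le> root (card I) (\<Prod>i\<in>I. x i + y i)"
proof -
  let ?n = "card I" and ?s = "\<lambda>i. x i + y i"
  have n: "0 < ?n"
    using I by (simp add: card_gt_0_iff)
  have s: "0 < ?s i" if "i \<in> I" for i
    using pos that by (simp add: add_pos_pos)
  have factor: "root ?n (\<Prod>i\<in>I. f i) = root ?n (\<Prod>i\<in>I. f i / ?s i) * root ?n (\<Prod>i\<in>I. ?s i)" for f
  proof -
    have "(\<Prod>i\<in>I. f i) = (\<Prod>i\<in>I. f i / ?s i) * (\<Prod>i\<in>I. ?s i)"
      unfolding prod.distrib[symmetric] using s by (intro prod.cong) (auto simp: less_imp_neq[symmetric])
    then show ?thesis
      by (simp add: real_root_mult)
  qed
  have mean: "root ?n (\<Prod>i\<in>I. f i / ?s i) \<le> (\<Sum>i\<in>I. f i / ?s i / ?n)"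
    if "\<And>i. i \<in> I \<Longrightarrow> 0 < f i" for f
    using arith_geom_mean[OF I, of "\<lambda>i. f i / ?s i"] that s n
    by (simp add: root_powr_inverse prod_nonneg less_imp_le)
  have "x i / ?s i / ?n + y i / ?s i / ?n = 1 / ?n" if "i \<in> I" for i
    using s[OF that] by (simp add: add_divide_distrib[symmetric])
  then have "(\<Sum>i\<in>I. x i / ?s i / ?n) + (\<Sum>i\<in>I. y i / ?s i / ?n) = (\<Sum>i\<in>I. 1 / ?n)"
    unfolding sum.distrib[symmetric] by (rule sum.cong[OF refl])
  also have "\<dots> = 1"
    using n by simp
  finally have "root ?n (\<Prod>i\<in>I. x i / ?s i) + root ?n (\<Prod>i\<in>I. y i / ?s i) \<le> 1"
    using mean[of x, OF pos(1)] mean[of y, OF pos(2)] by linarith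
  then have "(root ?n (\<Prod>i\<in>I. x i / ?s i) + root ?n (\<Prod>i\<in>I. y i / ?s i)) * root ?n (\<Prod>i\<in>I. ?s i)
      \<le> 1 * root ?n (\<Prod>i\<in>I. ?s i)"
    using s by (intro mult_right_mono real_root_ge_zero prod_nonneg) (auto intro: less_imp_le)
  then show ?thesis
    by (simp add: factor[of x] factor[of y] distrib_right)
qed

lemma brunn_minkowski_cbox:
  fixes a b c d :: "'a::euclidean_space"
  assumes "box a b \<noteq> {}" "box c d \<noteq> {}"
  shows "root DIM('a) (measure lebesgue (cbox a b)) + root DIM('a) (measure lebesgue (cbox c d))
    \<le> root DIM('a) (measure lebesgue (cbox a b + cbox c d))"
proof -
  have lt: "\<forall>i\<in>Basis. a \<bullet> i < b \<bullet> i" "\<forall>i\<in>Basis. c \<bullet> i < d \<bullet> i"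
    using assms by (simp_all add: box_ne_empty)
  then have ne: "cbox a b \<noteq> {}" "cbox c d \<noteq> {}"
    by (auto simp: box_ne_empty less_imp_le)
  have ne3: "cbox (a + c) (b + d) \<noteq> {}"
    using lt by (simp add: box_ne_empty inner_add_left add_mono less_imp_le)
  have "(\<Prod>i\<in>Basis. (b + d) \<bullet> i - (a + c) \<bullet> i)
      = (\<Prod>i\<in>Basis. (b \<bullet> i - a \<bullet> i) + (d \<bullet> i - c \<bullet> i))"
    by (simp add: inner_add_left algebra_simps)
  then show ?thesis
    using root_prod_add_le[of Basis "\<lambda>i. b \<bullet> i - a \<bullet> i" "\<lambda>i. d \<bullet> i - c \<bullet> i"] lt
    by (simp add: cbox_plus_cbox[OF ne(1,2)] measure_cbox_eq_prod[OF ne(1)] measure_cbox_eq_prod[OF ne(2)]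
        measure_cbox_eq_prod[OF ne3])
qed

text \<open>
  Unlike \<open>division_of\<close>, a box family may contain empty and degenerate boxes, so that it
  stays a box family when its members are cut by a coordinate halfspace.
\<close>

definition box_family :: "'a::euclidean_space set set \<Rightarrow> bool" where
  "box_family \<P> \<longleftrightarrow> finite \<P> \<and> (\<forall>K\<in>\<P>. \<exists>a b. K = cbox a b) \<and>
     pairwise (\<lambda>K L. interior K \<inter> interior L = {}) \<P>"

text \<open>
  The induction runs on the number of nondegenerate boxes, which cutting never increases.
\<close>

definition nondegenerate :: "'a::topological_space set set \<Rightarrow> 'a set set" where
  "nondegenerate \<P> = {K \<in> \<P>. interior K \<noteq> {}}"

lemma box_family_division_of: "\<D> division_of S \<Longrightarrow> box_family \<D>"
  by (auto simp: division_of_def box_family_def pairwise_def)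

lemma compact_Union_box_family: "box_family \<P> \<Longrightarrow> compact (\<Union>\<P>)"
  unfolding box_family_def by (metis compact_Union compact_cbox)

lemma finite_nondegenerate: "box_family \<P> \<Longrightarrow> finite (nondegenerate \<P>)"
  by (simp add: box_family_def nondegenerate_def)

lemma measure_nondegenerate_pos:
  assumes "box_family \<P>" "K \<in> nondegenerate \<P>"
  shows "0 < measure lebesgue K"
proof -
  have "K \<in> \<P>" "interior K \<noteq> {}"
    using assms(2) by (simp_all add: nondegenerate_def)
  moreover obtain a b where "K = cbox a b"
    using assms(1) \<open>K \<in> \<P>\<close> by (auto simp: box_family_def)
  ultimately show ?thesis
    using negligible_convex_interior[of K] negligible_iff_measure0[of K]
    by (simp add: zero_less_measure_iff)
qed

lemma negligible_Int_box_family: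
  assumes "box_family \<P>" "K \<in> \<P>" "L \<in> \<P>" "K \<noteq> L"
  shows "negligible (K \<inter> L)"
proof -
  obtain a b c d where KL: "K = cbox a b" "L = cbox c d"
    using assms unfolding box_family_def by metis
  moreover have "box a b \<inter> box c d = {}"
    using assms KL unfolding box_family_def pairwise_def by fastforce
  ultimately have "K \<inter> L \<subseteq> (cbox a b - box a b) \<union> (cbox c d - box c d)"
    by auto
  then show ?thesis
    by (rule negligible_subset[OF negligible_Un[OF negligible_frontier_interval negligible_frontier_interval]])
qed

lemma measure_Union_box_family_Int:
  assumes "box_family \<P>" "closed H"
  shows "measure lebesgue (\<Union>\<P> \<inter> H) = (\<Sum>K\<in>\<P>. measure lebesgue (K \<inter> H))"
proof -
  have "\<Union>\<P> \<inter> H = (\<Union>K\<in>\<P>. K \<inter> H)"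
    by blast
  also have "measure lebesgue \<dots> = (\<Sum>K\<in>\<P>. measure lebesgue (K \<inter> H))"
  proof (rule measure_negligible_finite_Union_image)
    show "finite \<P>"
      using assms(1) by (simp add: box_family_def)
    show "K \<inter> H \<in> lmeasurable" if "K \<in> \<P>" for K
      using assms that unfolding box_family_def by (auto intro!: lmeasurable_compact compact_Int_closed)
    show "pairwise (\<lambda>K L. negligible (K \<inter> H \<inter> (L \<inter> H))) \<P>"
      unfolding pairwise_def using negligible_Int_box_family[OF assms(1)]
      by (blast intro: negligible_subset)
  qed
  finally show ?thesis .
qed

lemma measure_Union_box_family:
  assumes "box_family \<P>"
  shows "measure lebesgue (\<Union>\<P>) = (\<Sum>K\<in>nondegenerate \<P>. measure lebesgue K)"
proof -
  have "measure lebesgue (\<Union>\<P>) = (\<Sum>K\<in>\<P>. measure lebesgue K)"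
    using measure_Union_box_family_Int[OF assms closed_UNIV] by simp
  also have "\<dots> = (\<Sum>K\<in>nondegenerate \<P>. measure lebesgue K)"
  proof (rule sum.mono_neutral_right)
    show "finite \<P>"
      using assms by (simp add: box_family_def)
    show "nondegenerate \<P> \<subseteq> \<P>"
      by (auto simp: nondegenerate_def)
    show "\<forall>K\<in>\<P> - nondegenerate \<P>. measure lebesgue K = 0"
      using assms
      by (auto simp: nondegenerate_def box_family_def negligible_convex_interior intro!: negligible_imp_measure0)
  qed
  finally show ?thesis .
qed

lemma card_nondegenerate_pos:
  assumes "box_family \<P>" "0 < measure lebesgue (\<Union>\<P>)"
  shows "0 < card (nondegenerate \<P>)"
  using assms measure_Union_box_family[OF assms(1)] finite_nondegenerate[OF assms(1)]
  by (auto simp: card_gt_0_iff)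

lemma box_family_Int:
  assumes "box_family \<P>" and cut: "\<And>a b. \<exists>a' b'. cbox a b \<inter> H = cbox a' b'"
  shows "box_family ((\<lambda>K. K \<inter> H) ` \<P>)"
  unfolding box_family_def
proof (intro conjI)
  show "finite ((\<lambda>K. K \<inter> H) ` \<P>)"
    using assms(1) by (simp add: box_family_def)
  show "\<forall>K\<in>(\<lambda>K. K \<inter> H) ` \<P>. \<exists>a b. K = cbox a b"
    using assms(1) cut by (auto simp: box_family_def)
  show "pairwise (\<lambda>K L. interior K \<inter> interior L = {}) ((\<lambda>K. K \<inter> H) ` \<P>)"
  proof (rule pairwise_imageI)
    fix K L assume "K \<in> \<P>" "L \<in> \<P>" "K \<noteq> L"
    then have "interior K \<inter> interior L = {}"
      using assms(1) by (auto simp: box_family_def pairwise_def)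
    then show "interior (K \<inter> H) \<inter> interior (L \<inter> H) = {}"
      by (auto simp: interior_Int)
  qed
qed

lemma box_family_Int_halfspace:
  assumes "box_family \<P>" "k \<in> Basis"
  shows "box_family ((\<lambda>K. K \<inter> {x. x \<bullet> k \<le> c}) ` \<P>)"
    and "box_family ((\<lambda>K. K \<inter> {x. x \<bullet> k \<ge> c}) ` \<P>)"
  by (intro box_family_Int[OF assms(1)], simp add: interval_split[OF assms(2)], blast)+

lemma card_nondegenerate_Int:
  assumes "finite \<P>"
  shows "card (nondegenerate ((\<lambda>K. K \<inter> H) ` \<P>))
    \<le> card {K \<in> nondegenerate \<P>. interior (K \<inter> H) \<noteq> {}}"
proof -
  have fin: "finite {K \<in> nondegenerate \<P>. interior (K \<inter> H) \<noteq> {}}"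
    using assms by (simp add: nondegenerate_def)
  have "nondegenerate ((\<lambda>K. K \<inter> H) ` \<P>)
      \<subseteq> (\<lambda>K. K \<inter> H) ` {K \<in> nondegenerate \<P>. interior (K \<inter> H) \<noteq> {}}"
  proof
    fix M assume "M \<in> nondegenerate ((\<lambda>K. K \<inter> H) ` \<P>)"
    then obtain K where "K \<in> \<P>" "M = K \<inter> H" "interior (K \<inter> H) \<noteq> {}"
      unfolding nondegenerate_def by blast
    then show "M \<in> (\<lambda>K. K \<inter> H) ` {K \<in> nondegenerate \<P>. interior (K \<inter> H) \<noteq> {}}"
      by (intro image_eqI[of _ _ K]) (auto simp: nondegenerate_def interior_Int)
  qed
  then have "card (nondegenerate ((\<lambda>K. K \<inter> H) ` \<P>))
      \<le> card ((\<lambda>K. K \<inter> H) ` {K \<in> nondegenerate \<P>. interior (K \<inter> H) \<noteq> {}})"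
    using fin by (intro card_mono finite_imageI)
  also have "\<dots> \<le> card {K \<in> nondegenerate \<P>. interior (K \<inter> H) \<noteq> {}}"
    using fin by (rule card_image_le)
  finally show ?thesis .
qed

lemma card_nondegenerate_Int_le:
  "finite \<P> \<Longrightarrow> card (nondegenerate ((\<lambda>K. K \<inter> H) ` \<P>)) \<le> card (nondegenerate \<P>)"
  by (rule le_trans[OF card_nondegenerate_Int card_mono]) (auto simp: nondegenerate_def)

lemma card_nondegenerate_Int_less:
  assumes "finite \<P>" "K \<in> nondegenerate \<P>" "interior (K \<inter> H) = {}"
  shows "card (nondegenerate ((\<lambda>K. K \<inter> H) ` \<P>)) < card (nondegenerate \<P>)"
  using assms
  by (intro le_less_trans[OF card_nondegenerate_Int psubset_card_mono]) (auto simp: nondegenerate_def)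

lemma isCont_measure_cbox_Int_halfspace:
  assumes "k \<in> Basis"
  shows "isCont (\<lambda>t. measure lebesgue (cbox a b \<inter> {x. x \<bullet> k \<ge> t})) s"
proof -
  have "(\<lambda>t. measure lebesgue (cbox a b \<inter> {x. x \<bullet> k \<ge> t}))
      = (\<lambda>t. \<Prod>i\<in>Basis. max 0 (b \<bullet> i - (if i = k then max (a \<bullet> k) t else a \<bullet> i)))"
    unfolding interval_split(2)[OF assms] measure_cbox_eq by (intro ext prod.cong refl) simp
  moreover have "isCont (\<lambda>t. if i = k then max (a \<bullet> k) t else a \<bullet> i) s" for i
    by (cases "i = k") (simp_all add: continuous_max)
  ultimately show ?thesis
    by (simp only:) (intro continuous_prod continuous_intros)
qed

lemma isCont_measure_box_family_Int_halfspace: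
  assumes "box_family \<P>" "k \<in> Basis"
  shows "isCont (\<lambda>t. measure lebesgue (\<Union>\<P> \<inter> {x. x \<bullet> k \<ge> t})) s"
proof -
  have "isCont (\<lambda>t. measure lebesgue (K \<inter> {x. x \<bullet> k \<ge> t})) s" if K: "K \<in> \<P>" for K
  proof -
    obtain a b where "K = cbox a b"
      using assms(1) K by (auto simp: box_family_def)
    then show ?thesis
      using isCont_measure_cbox_Int_halfspace[OF assms(2)] by simp
  qed
  then show ?thesis
    unfolding measure_Union_box_family_Int[OF assms(1) closed_halfspace_component_ge]
    by (intro isCont_sum ballI)
qed

lemma box_family_halfspace_measure_eq:
  assumes "box_family \<P>" "k \<in> Basis" "0 \<le> y" "y \<le> measure lebesgue (\<Union>\<P>)"
  obtains t where "measure lebesgue (\<Union>\<P> \<inter> {x. x \<bullet> k \<ge> t}) = y"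
proof -
  obtain R where "0 < R" and R: "\<And>x. x \<in> \<Union>\<P> \<Longrightarrow> norm x \<le> R"
    using compact_imp_bounded[OF compact_Union_box_family[OF assms(1)]] by (auto simp: bounded_pos)
  have bound: "-R \<le> x \<bullet> k" "x \<bullet> k \<le> R" if "x \<in> \<Union>\<P>" for x
    using Basis_le_norm[OF assms(2), of x] R[OF that] by linarith+
  have "\<Union>\<P> \<inter> {x. x \<bullet> k \<ge> -R} = \<Union>\<P>"
    using bound(1) by auto
  moreover have "\<Union>\<P> \<inter> {x. x \<bullet> k \<ge> R + 1} = {}"
    using bound(2) by (fastforce simp: not_le)
  ultimately obtain t where "measure lebesgue (\<Union>\<P> \<inter> {x. x \<bullet> k \<ge> t}) = y"
    using IVT2[of "\<lambda>t. measure lebesgue (\<Union>\<P> \<inter> {x. x \<bullet> k \<ge> t})" "R + 1" y "-R"]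
      assms \<open>0 < R\<close> isCont_measure_box_family_Int_halfspace[OF assms(1,2)] by auto
  then show ?thesis
    using that by blast
qed

lemma nondegenerate_separated:
  assumes "box_family \<P>" "2 \<le> card (nondegenerate \<P>)"
  obtains k c K L where "k \<in> Basis" "K \<in> nondegenerate \<P>" "L \<in> nondegenerate \<P>"
    "K \<subseteq> {x. x \<bullet> k \<le> c}" "L \<subseteq> {x. x \<bullet> k \<ge> c}"
proof -
  have "\<not> card (nondegenerate \<P>) \<le> Suc 0"
    using assms(2) by linarith
  then obtain K L where KL: "K \<in> nondegenerate \<P>" "L \<in> nondegenerate \<P>" "K \<noteq> L"
    using card_le_Suc0_iff_eq[OF finite_nondegenerate[OF assms(1)]] by blast
  then have "K \<in> \<P>" "L \<in> \<P>" and ne: "interior K \<noteq> {}" "interior L \<noteq> {}"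
    unfolding nondegenerate_def by blast+
  then obtain a b c d where K: "K = cbox a b" and L: "L = cbox c d"
    using assms(1) unfolding box_family_def by meson
  have "interior K \<inter> interior L = {}"
    using assms(1) \<open>K \<in> \<P>\<close> \<open>L \<in> \<P>\<close> \<open>K \<noteq> L\<close>
    unfolding box_family_def pairwise_def by blast
  then have "box a b \<inter> box c d = {}"
    using K L by simp
  then obtain i where i: "i \<in> Basis"
    "b \<bullet> i \<le> a \<bullet> i \<or> d \<bullet> i \<le> c \<bullet> i \<or> b \<bullet> i \<le> c \<bullet> i \<or> d \<bullet> i \<le> a \<bullet> i"
    unfolding disjoint_interval by blast
  moreover have "a \<bullet> i < b \<bullet> i" "c \<bullet> i < d \<bullet> i"
    using ne K L i(1) by (simp_all add: box_ne_empty)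
  ultimately consider "b \<bullet> i \<le> c \<bullet> i" | "d \<bullet> i \<le> a \<bullet> i"
    by linarith
  then show ?thesis
  proof cases
    case 1
    then have "K \<subseteq> {x. x \<bullet> i \<le> b \<bullet> i}" "L \<subseteq> {x. x \<bullet> i \<ge> b \<bullet> i}"
      using K L i(1) by (auto simp: mem_box intro: order_trans)
    then show ?thesis
      by (rule that[OF i(1) KL(1,2)])
  next
    case 2
    then have "L \<subseteq> {x. x \<bullet> i \<le> d \<bullet> i}" "K \<subseteq> {x. x \<bullet> i \<ge> d \<bullet> i}"
      using K L i(1) by (auto simp: mem_box intro: order_trans)
    then show ?thesis
      by (rule that[OF i(1) KL(2,1)])
  qed
qed

lemma root_add_le_of_halves:
  fixes n :: nat
  assumes n: "0 < n" and l: "0 < l" "l < 1" and pq: "0 \<le> p" "0 \<le> q"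
    and M: "M\<^sub>1 + M\<^sub>2 \<le> M"
    and h1: "root n (l * p) + root n (l * q) \<le> root n M\<^sub>1"
    and h2: "root n ((1 - l) * p) + root n ((1 - l) * q) \<le> root n M\<^sub>2"
  shows "root n p + root n q \<le> root n M"
proof -
  define s where "s = root n p + root n q"
  have s: "0 \<le> s"
    using pq by (simp add: s_def add_nonneg_nonneg real_root_ge_zero)
  have scaled: "u * s ^ n \<le> N" if u: "0 < u" and h: "root n (u * p) + root n (u * q) \<le> root n N" for u N
  proof -
    have "root n (u * s ^ n) = root n u * s"
      using n s by (simp add: real_root_mult real_root_pos2)
    also have "\<dots> = root n (u * p) + root n (u * q)"
      by (simp add: s_def real_root_mult distrib_left)
    finally have "root n (u * s ^ n) \<le> root n N"
      using h by simp
    then show ?thesis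
      using n by simp
  qed
  have "l * s ^ n + (1 - l) * s ^ n \<le> M"
    using scaled[OF l(1) h1] scaled[of "1 - l" M\<^sub>2] l h2 M by simp
  then have "root n (s ^ n) \<le> root n M"
    using n by (simp add: algebra_simps)
  then show ?thesis
    using real_root_pos2[OF n s] by (simp add: s_def)
qed

lemma brunn_minkowski_box_family_base:
  fixes \<P> \<Q> :: "'a::euclidean_space set set"
  assumes \<P>: "box_family \<P>" "nondegenerate \<P> = {K}" and \<Q>: "box_family \<Q>" "nondegenerate \<Q> = {L}"
  shows "root DIM('a) (measure lebesgue (\<Union>\<P>)) + root DIM('a) (measure lebesgue (\<Union>\<Q>))
    \<le> root DIM('a) (measure lebesgue (\<Union>\<P> + \<Union>\<Q>))"
proof -
  have "K \<in> \<P>" "interior K \<noteq> {}" "L \<in> \<Q>" "interior L \<noteq> {}"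
    using \<P>(2) \<Q>(2) unfolding nondegenerate_def by blast+
  moreover obtain a b c d where K: "K = cbox a b" and L: "L = cbox c d"
    using \<P>(1) \<Q>(1) \<open>K \<in> \<P>\<close> \<open>L \<in> \<Q>\<close> unfolding box_family_def by meson
  ultimately have "box a b \<noteq> {}" "box c d \<noteq> {}"
    by auto
  note BM = brunn_minkowski_cbox[OF this, folded K L]
  have "K + L \<subseteq> \<Union>\<P> + \<Union>\<Q>"
    using \<open>K \<in> \<P>\<close> \<open>L \<in> \<Q>\<close> by (intro set_plus_mono2) auto
  then have mono: "measure lebesgue (K + L) \<le> measure lebesgue (\<Union>\<P> + \<Union>\<Q>)"
    using \<P>(1) \<Q>(1) K L
    by (intro measure_mono_fmeasurable) (auto intro!: fmeasurableD lmeasurable_compact compact_set_plus compact_Union_box_family)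
  have "measure lebesgue (\<Union>\<P>) = measure lebesgue K" "measure lebesgue (\<Union>\<Q>) = measure lebesgue L"
    using measure_Union_box_family[OF \<P>(1)] measure_Union_box_family[OF \<Q>(1)] \<P>(2) \<Q>(2) by simp_all
  then have "root DIM('a) (measure lebesgue (\<Union>\<P>)) + root DIM('a) (measure lebesgue (\<Union>\<Q>))
      \<le> root DIM('a) (measure lebesgue (K + L))"
    using BM by simp
  also have "\<dots> \<le> root DIM('a) (measure lebesgue (\<Union>\<P> + \<Union>\<Q>))"
    using mono by simp
  finally show ?thesis .
qed

lemma box_family_proportional_cut:
  assumes \<P>: "box_family \<P>" and pos: "0 < measure lebesgue (\<Union>\<P>)"
    and two: "2 \<le> card (nondegenerate \<P>)"
  obtains k c l where "k \<in> Basis" "0 < l" "l < 1"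
    "measure lebesgue (\<Union>\<P> \<inter> {x. x \<bullet> k \<le> c}) = l * measure lebesgue (\<Union>\<P>)"
    "measure lebesgue (\<Union>\<P> \<inter> {x. x \<bullet> k \<ge> c}) = (1 - l) * measure lebesgue (\<Union>\<P>)"
    "card (nondegenerate ((\<lambda>X. X \<inter> {x. x \<bullet> k \<le> c}) ` \<P>)) < card (nondegenerate \<P>)"
    "card (nondegenerate ((\<lambda>X. X \<inter> {x. x \<bullet> k \<ge> c}) ` \<P>)) < card (nondegenerate \<P>)"
proof -
  obtain k c K L where k: "k \<in> Basis" and KL: "K \<in> nondegenerate \<P>" "L \<in> nondegenerate \<P>"
    and sep: "K \<subseteq> {x. x \<bullet> k \<le> c}" "L \<subseteq> {x. x \<bullet> k \<ge> c}"
    using nondegenerate_separated[OF \<P> two] by metis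
  define l where "l = measure lebesgue (\<Union>\<P> \<inter> {x. x \<bullet> k \<le> c}) / measure lebesgue (\<Union>\<P>)"
  have lmeas: "\<Union>\<P> \<inter> {x. x \<bullet> k \<le> c} \<in> lmeasurable"
    "\<Union>\<P> \<inter> {x. x \<bullet> k \<ge> c} \<in> lmeasurable"
    using compact_Union_box_family[OF \<P>] by (auto intro!: lmeasurable_compact compact_Int_closed
        closed_halfspace_component_le closed_halfspace_component_ge)
  have "K \<in> \<P>" "L \<in> \<P>"
    using KL by (simp_all add: nondegenerate_def)
  then have "measure lebesgue K \<le> measure lebesgue (\<Union>\<P> \<inter> {x. x \<bullet> k \<le> c})"
    "measure lebesgue L \<le> measure lebesgue (\<Union>\<P> \<inter> {x. x \<bullet> k \<ge> c})"
    using sep lmeas \<P> by (auto intro!: measure_mono_fmeasurable simp: box_family_def)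
  then have "0 < measure lebesgue (\<Union>\<P> \<inter> {x. x \<bullet> k \<le> c})"
    "0 < measure lebesgue (\<Union>\<P> \<inter> {x. x \<bullet> k \<ge> c})"
    using measure_nondegenerate_pos[OF \<P>] KL by (meson less_le_trans)+
  with measure_split_halfspace[OF lmeasurable_compact[OF compact_Union_box_family[OF \<P>]] k, of c] pos
  have "0 < l" "l < 1"
    "measure lebesgue (\<Union>\<P> \<inter> {x. x \<bullet> k \<le> c}) = l * measure lebesgue (\<Union>\<P>)"
    "measure lebesgue (\<Union>\<P> \<inter> {x. x \<bullet> k \<ge> c}) = (1 - l) * measure lebesgue (\<Union>\<P>)"
    by (auto simp: l_def field_simps)
  moreover have "interior (L \<inter> {x. x \<bullet> k \<le> c}) = {}" "interior (K \<inter> {x. x \<bullet> k \<ge> c}) = {}"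
    by (rule interior_subset_standard_hyperplane[OF k, where c=c], use sep in force)+
  then have "card (nondegenerate ((\<lambda>X. X \<inter> {x. x \<bullet> k \<le> c}) ` \<P>)) < card (nondegenerate \<P>)"
    "card (nondegenerate ((\<lambda>X. X \<inter> {x. x \<bullet> k \<ge> c}) ` \<P>)) < card (nondegenerate \<P>)"
    using \<P> unfolding box_family_def
    by (blast intro: card_nondegenerate_Int_less[OF _ KL(2)] card_nondegenerate_Int_less[OF _ KL(1)])+
  ultimately show ?thesis
    using that k by blast
qed

lemma brunn_minkowski_box_family_step:
  fixes \<P> \<Q> :: "'a::euclidean_space set set"
  assumes \<P>: "box_family \<P>" and \<Q>: "box_family \<Q>"
    and pos: "0 < measure lebesgue (\<Union>\<P>)" "0 < measure lebesgue (\<Union>\<Q>)"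
    and two: "2 \<le> card (nondegenerate \<P>)"
    and IH: "\<And>\<P>' \<Q>' :: 'a set set. box_family \<P>' \<Longrightarrow> box_family \<Q>' \<Longrightarrow>
      0 < measure lebesgue (\<Union>\<P>') \<Longrightarrow> 0 < measure lebesgue (\<Union>\<Q>') \<Longrightarrow>
      card (nondegenerate \<P>') < card (nondegenerate \<P>) \<Longrightarrow>
      card (nondegenerate \<Q>') \<le> card (nondegenerate \<Q>) \<Longrightarrow>
      root DIM('a) (measure lebesgue (\<Union>\<P>')) + root DIM('a) (measure lebesgue (\<Union>\<Q>'))
        \<le> root DIM('a) (measure lebesgue (\<Union>\<P>' + \<Union>\<Q>'))"
  shows "root DIM('a) (measure lebesgue (\<Union>\<P>)) + root DIM('a) (measure lebesgue (\<Union>\<Q>))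
    \<le> root DIM('a) (measure lebesgue (\<Union>\<P> + \<Union>\<Q>))"
proof -
  obtain k c l where k: "k \<in> Basis" and l: "0 < l" "l < 1"
    and m\<^sub>P: "measure lebesgue (\<Union>\<P> \<inter> {x. x \<bullet> k \<le> c}) = l * measure lebesgue (\<Union>\<P>)"
      "measure lebesgue (\<Union>\<P> \<inter> {x. x \<bullet> k \<ge> c}) = (1 - l) * measure lebesgue (\<Union>\<P>)"
    and card\<^sub>P: "card (nondegenerate ((\<lambda>X. X \<inter> {x. x \<bullet> k \<le> c}) ` \<P>)) < card (nondegenerate \<P>)"
      "card (nondegenerate ((\<lambda>X. X \<inter> {x. x \<bullet> k \<ge> c}) ` \<P>)) < card (nondegenerate \<P>)"
    using box_family_proportional_cut[OF \<P> pos(1) two] by metis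
  obtain t where t: "measure lebesgue (\<Union>\<Q> \<inter> {x. x \<bullet> k \<ge> t}) = (1 - l) * measure lebesgue (\<Union>\<Q>)"
    using box_family_halfspace_measure_eq[OF \<Q> k, of "(1 - l) * measure lebesgue (\<Union>\<Q>)"] l pos(2) by auto
  have m\<^sub>Q: "measure lebesgue (\<Union>\<Q> \<inter> {x. x \<bullet> k \<le> t}) = l * measure lebesgue (\<Union>\<Q>)"
    using t measure_split_halfspace[OF lmeasurable_compact[OF compact_Union_box_family[OF \<Q>]] k, of t]
    by (simp add: algebra_simps)
  let ?P\<^sub>1 = "(\<lambda>X. X \<inter> {x. x \<bullet> k \<le> c}) ` \<P>" and ?P\<^sub>2 = "(\<lambda>X. X \<inter> {x. x \<bullet> k \<ge> c}) ` \<P>"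
  let ?Q\<^sub>1 = "(\<lambda>X. X \<inter> {x. x \<bullet> k \<le> t}) ` \<Q>" and ?Q\<^sub>2 = "(\<lambda>X. X \<inter> {x. x \<bullet> k \<ge> t}) ` \<Q>"
  have U: "\<Union>?P\<^sub>1 = \<Union>\<P> \<inter> {x. x \<bullet> k \<le> c}" "\<Union>?P\<^sub>2 = \<Union>\<P> \<inter> {x. x \<bullet> k \<ge> c}"
    "\<Union>?Q\<^sub>1 = \<Union>\<Q> \<inter> {x. x \<bullet> k \<le> t}" "\<Union>?Q\<^sub>2 = \<Union>\<Q> \<inter> {x. x \<bullet> k \<ge> t}"
    by auto
  have card\<^sub>Q: "card (nondegenerate ((\<lambda>X. X \<inter> H) ` \<Q>)) \<le> card (nondegenerate \<Q>)" for H
    using \<Q> by (simp add: box_family_def card_nondegenerate_Int_le)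
  have "root DIM('a) (measure lebesgue (\<Union>?P\<^sub>1)) + root DIM('a) (measure lebesgue (\<Union>?Q\<^sub>1))
      \<le> root DIM('a) (measure lebesgue (\<Union>?P\<^sub>1 + \<Union>?Q\<^sub>1))"
    by (rule IH) (use box_family_Int_halfspace[OF \<P> k] box_family_Int_halfspace[OF \<Q> k] card\<^sub>P card\<^sub>Q
        l pos m\<^sub>P m\<^sub>Q in \<open>simp_all add: U\<close>)
  moreover have "root DIM('a) (measure lebesgue (\<Union>?P\<^sub>2)) + root DIM('a) (measure lebesgue (\<Union>?Q\<^sub>2))
      \<le> root DIM('a) (measure lebesgue (\<Union>?P\<^sub>2 + \<Union>?Q\<^sub>2))"
    by (rule IH) (use box_family_Int_halfspace[OF \<P> k] box_family_Int_halfspace[OF \<Q> k] card\<^sub>P card\<^sub>Q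
        l pos m\<^sub>P t in \<open>simp_all add: U\<close>)
  ultimately show ?thesis
    using root_add_le_of_halves[OF DIM_positive l measure_nonneg measure_nonneg
        measure_set_plus_split_le[OF compact_Union_box_family[OF \<P>] compact_Union_box_family[OF \<Q>] k]]
    unfolding U m\<^sub>P m\<^sub>Q t by blast
qed

theorem brunn_minkowski_box_family:
  fixes \<P> \<Q> :: "'a::euclidean_space set set"
  assumes "box_family \<P>" "box_family \<Q>" "0 < measure lebesgue (\<Union>\<P>)" "0 < measure lebesgue (\<Union>\<Q>)"
  shows "root DIM('a) (measure lebesgue (\<Union>\<P>)) + root DIM('a) (measure lebesgue (\<Union>\<Q>))
    \<le> root DIM('a) (measure lebesgue (\<Union>\<P> + \<Union>\<Q>))"
  using assms
proof (induction "card (nondegenerate \<P>) + card (nondegenerate \<Q>)" arbitrary: \<P> \<Q> rule: less_induct)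
  case less
  have "0 < card (nondegenerate \<P>)" "0 < card (nondegenerate \<Q>)"
    using less.prems by (simp_all add: card_nondegenerate_pos)
  then consider "2 \<le> card (nondegenerate \<P>)" | "2 \<le> card (nondegenerate \<Q>)"
    | "card (nondegenerate \<P>) = 1" "card (nondegenerate \<Q>) = 1"
    by linarith
  then show ?case
  proof cases
    case 1
    show ?thesis
      by (rule brunn_minkowski_box_family_step[OF less.prems 1]) (auto intro: less.hyps)
  next
    case 2
    have "root DIM('a) (measure lebesgue (\<Union>\<Q>)) + root DIM('a) (measure lebesgue (\<Union>\<P>))
        \<le> root DIM('a) (measure lebesgue (\<Union>\<Q> + \<Union>\<P>))"
      by (rule brunn_minkowski_box_family_step[OF less.prems(2,1,4,3) 2]) (auto intro: less.hyps)
    then show ?thesis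
      by (simp add: add.commute)
  next
    case 3
    then obtain K L where "nondegenerate \<P> = {K}" "nondegenerate \<Q> = {L}"
      by (meson card_1_singletonE)
    then show ?thesis
      by (intro brunn_minkowski_box_family_base[OF less.prems(1) _ less.prems(2)])
  qed
qed

section \<open>Brunn--Minkowski for open and convex sets\<close>

lemma open_box_family_approx:
  fixes U :: "'a::euclidean_space set"
  assumes "open U" "bounded U"
  obtains \<P> :: "nat \<Rightarrow> 'a set set" where "\<And>j. box_family (\<P> j)" "\<And>j. \<Union>(\<P> j) \<subseteq> U"
    "(\<lambda>j. measure lebesgue (\<Union>(\<P> j))) \<longlonglongrightarrow> measure lebesgue U"
proof (cases "U = {}")
  case True
  then show ?thesis
    using that[of "\<lambda>j. {}"] by (simp add: box_family_def)
next
  case False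
  obtain \<D> where \<D>: "countable \<D>" "\<D> \<subseteq> Pow U" "\<Union>\<D> = U"
    "\<And>X. X \<in> \<D> \<Longrightarrow> \<exists>a b. X = cbox a b"
    using open_countable_Union_open_cbox[OF assms(1)] by metis
  define E where "E = from_nat_into \<D>"
  have "\<D> \<noteq> {}"
    using \<D>(3) False by auto
  then have E: "range E = \<D>"
    using \<D>(1) by (simp add: E_def range_from_nat_into)
  define A where "A j = \<Union>(E ` {..j})" for j
  have "\<exists>\<D>'. \<D>' division_of A j" for j
  proof -
    have "\<And>X. X \<in> E ` {..j} \<Longrightarrow> \<exists>a b. X = cbox a b"
      using \<D>(4) E by auto
    then show ?thesis
      unfolding A_def by (metis elementary_unions_intervals finite_atMost finite_imageI)
  qed
  then obtain \<P> where \<P>: "\<And>j. \<P> j division_of A j"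
    by metis
  have fam: "box_family (\<P> j)" and A: "\<Union>(\<P> j) = A j" for j
    using box_family_division_of[OF \<P>] division_ofD(6)[OF \<P>] by auto
  have AU: "A j \<subseteq> U" for j
    unfolding A_def using \<D>(2) E by auto
  have UA: "(\<Union>j. A j) = U"
    unfolding A_def using \<D>(3) E by auto
  have "(\<lambda>j. measure lebesgue (A j)) \<longlonglongrightarrow> measure lebesgue (\<Union>j. A j)"
  proof (rule Lim_measure_incseq)
    show "range A \<subseteq> sets lebesgue"
      using fam by (auto intro!: fmeasurableD lmeasurable_compact compact_Union_box_family simp flip: A)
    show "incseq A"
      unfolding A_def incseq_def by (fastforce intro: le_trans)
    show "emeasure lebesgue (\<Union>j. A j) \<noteq> \<infinity>"
      using fmeasurableD2[OF lmeasurable_open[OF assms(2,1)]] by (simp add: UA)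
  qed
  then show ?thesis
    using that[OF fam] A AU UA by simp
qed

theorem brunn_minkowski_open:
  fixes U V :: "'a::euclidean_space set"
  assumes U: "open U" "bounded U" "U \<noteq> {}" and V: "open V" "bounded V" "V \<noteq> {}"
  shows "root DIM('a) (measure lebesgue U) + root DIM('a) (measure lebesgue V)
    \<le> root DIM('a) (measure lebesgue (U + V))"
proof -
  obtain \<P> where \<P>: "\<And>j. box_family (\<P> j)" "\<And>j. \<Union>(\<P> j) \<subseteq> U"
    "(\<lambda>j. measure lebesgue (\<Union>(\<P> j))) \<longlonglongrightarrow> measure lebesgue U"
    using open_box_family_approx[OF U(1,2)] by blast
  obtain \<Q> where \<Q>: "\<And>j. box_family (\<Q> j)" "\<And>j. \<Union>(\<Q> j) \<subseteq> V"
    "(\<lambda>j. measure lebesgue (\<Union>(\<Q> j))) \<longlonglongrightarrow> measure lebesgue V"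
    using open_box_family_approx[OF V(1,2)] by blast
  have UV: "U + V \<in> lmeasurable"
    using U V by (intro lmeasurable_open bounded_set_plus open_set_plus)
  have "\<forall>\<^sub>F j in sequentially. 0 < measure lebesgue (\<Union>(\<P> j)) \<and> 0 < measure lebesgue (\<Union>(\<Q> j))"
    using order_tendstoD(1)[OF \<P>(3) measure_open_pos[OF U]] order_tendstoD(1)[OF \<Q>(3) measure_open_pos[OF V]]
    by (rule eventually_conj)
  then have "\<forall>\<^sub>F j in sequentially. root DIM('a) (measure lebesgue (\<Union>(\<P> j))) + root DIM('a) (measure lebesgue (\<Union>(\<Q> j)))
      \<le> root DIM('a) (measure lebesgue (U + V))"
  proof eventually_elim
    case (elim j)
    have "root DIM('a) (measure lebesgue (\<Union>(\<P> j))) + root DIM('a) (measure lebesgue (\<Union>(\<Q> j)))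
        \<le> root DIM('a) (measure lebesgue (\<Union>(\<P> j) + \<Union>(\<Q> j)))"
      using brunn_minkowski_box_family[OF \<P>(1) \<Q>(1)] elim by blast
    also have "\<dots> \<le> root DIM('a) (measure lebesgue (U + V))"
      using set_plus_mono2[OF \<P>(2) \<Q>(2)] UV \<P>(1) \<Q>(1)
      by (auto intro!: measure_mono_fmeasurable fmeasurableD lmeasurable_compact compact_set_plus compact_Union_box_family)
    finally show ?case .
  qed
  moreover have "(\<lambda>j. root DIM('a) (measure lebesgue (\<Union>(\<P> j))) + root DIM('a) (measure lebesgue (\<Union>(\<Q> j))))
      \<longlonglongrightarrow> root DIM('a) (measure lebesgue U) + root DIM('a) (measure lebesgue V)"
    by (intro tendsto_add tendsto_real_root \<P>(3) \<Q>(3))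
  ultimately show ?thesis
    by (intro tendsto_upperbound) auto
qed

theorem brunn_minkowski_convex:
  fixes K L :: "'a::euclidean_space set"
  assumes K: "convex K" "bounded K" "K \<noteq> {}" and L: "convex L" "bounded L" "L \<noteq> {}"
  shows "root DIM('a) (measure lebesgue K) + root DIM('a) (measure lebesgue L)
    \<le> root DIM('a) (measure lebesgue (K + L))"
proof -
  have meas: "K \<in> lmeasurable" "L \<in> lmeasurable" "K + L \<in> lmeasurable"
    using K L by (auto intro!: measurable_convex convex_set_plus bounded_set_plus)
  consider "interior K = {}" | "interior L = {}" | "interior K \<noteq> {}" "interior L \<noteq> {}"
    by blast
  then show ?thesis
  proof cases
    case 1
    then have "measure lebesgue K = 0"
      using negligible_convex_interior[OF K(1)] negligible_imp_measure0 by blast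
    moreover obtain x where "x \<in> K"
      using K(3) by blast
    ultimately show ?thesis
      using measure_le_set_plus[OF _ meas(2,3)] by simp
  next
    case 2
    then have "measure lebesgue L = 0"
      using negligible_convex_interior[OF L(1)] negligible_imp_measure0 by blast
    moreover obtain x where "x \<in> L"
      using L(3) by blast
    ultimately show ?thesis
      using measure_le_set_plus[of x L K] meas by (simp add: add.commute)
  next
    case 3
    have "root DIM('a) (measure lebesgue (interior K)) + root DIM('a) (measure lebesgue (interior L))
        \<le> root DIM('a) (measure lebesgue (interior K + interior L))"
      using 3 K L by (intro brunn_minkowski_open) (auto intro: bounded_subset[OF _ interior_subset])
    also have "\<dots> \<le> root DIM('a) (measure lebesgue (K + L))"
      using meas(3) K(2) L(2) set_plus_mono2[OF interior_subset interior_subset, of K L]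
      by (auto intro!: measure_mono_fmeasurable fmeasurableD lmeasurable_open open_set_plus bounded_set_plus
          intro: bounded_subset[OF _ interior_subset])
    finally show ?thesis
      using measure_interior[OF K(2) negligible_convex_frontier[OF K(1)]]
        measure_interior[OF L(2) negligible_convex_frontier[OF L(1)]] by simp
  qed
qed

section \<open>Volume of the unit-ball hull\<close>

lemma volume_radius_le_outradius:
  fixes A :: "'a::euclidean_space set"
  assumes "A \<noteq> {}" "bounded A" "0 \<le> \<rho>"
    and "measure lebesgue (cball (0::'a) \<rho>) \<le> measure lebesgue (convex hull A)"
  shows "\<rho> \<le> outradius A"
proof (rule ccontr)
  assume "\<not> \<rho> \<le> outradius A"
  then have "Inf {\<sigma>. \<exists>x. A \<subseteq> cball x \<sigma>} < \<rho>"
    by (simp add: outradius_def)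
  moreover have "{\<sigma>. \<exists>x. A \<subseteq> cball x \<sigma>} \<noteq> {}"
    using assms(2) bounded_subset_cball by blast
  ultimately obtain \<sigma> where "\<sigma> \<in> {\<sigma>. \<exists>x. A \<subseteq> cball x \<sigma>}" "\<sigma> < \<rho>"
    by (meson cInf_lessD)
  then obtain x where x: "A \<subseteq> cball x \<sigma>" and "\<sigma> < \<rho>"
    by blast
  obtain a where "a \<in> A"
    using assms(1) by blast
  then have "dist x a \<le> \<sigma>"
    using x by auto
  then have "0 \<le> \<sigma>"
    using zero_le_dist[of x a] by linarith
  have "convex hull A \<subseteq> cball x \<sigma>"
    using x by (intro hull_minimal convex_cball)
  then have "measure lebesgue (convex hull A) \<le> measure lebesgue (cball x \<sigma>)"
    using assms(2) by (intro measure_mono_fmeasurable fmeasurableD measurable_convex) (auto simp: bounded_convex_hull)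
  also have "\<dots> = \<sigma> ^ DIM('a) * measure lebesgue (cball (0::'a) 1)"
    by (rule measure_cball_eq[OF \<open>0 \<le> \<sigma>\<close>])
  also have "\<dots> < \<rho> ^ DIM('a) * measure lebesgue (cball (0::'a) 1)"
    using \<open>0 \<le> \<sigma>\<close> \<open>\<sigma> < \<rho>\<close> content_cball_pos[of 1 "0::'a"]
    by (intro mult_strict_right_mono power_strict_mono) auto
  also have "\<dots> = measure lebesgue (cball (0::'a) \<rho>)"
    by (rule measure_cball_eq[OF assms(3), symmetric])
  finally show False
    using assms(4) by simp
qed

lemma convex_unit_ball_hull: "convex (unit_ball_hull A)"
  unfolding unit_ball_hull_def by (intro convex_INT convex_cball)

lemma bounded_unit_ball_hull: "A \<noteq> {} \<Longrightarrow> bounded (unit_ball_hull A)"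
  unfolding unit_ball_hull_def by (meson INT_lower bounded_cball bounded_subset ex_in_conv)

lemma unit_ball_hull_minus_convex_hull_subset:
  "unit_ball_hull A + uminus ` (convex hull A) \<subseteq> cball 0 1"
proof
  fix z assume "z \<in> unit_ball_hull A + uminus ` (convex hull A)"
  then obtain x y where z: "z = x - y" "x \<in> unit_ball_hull A" "y \<in> convex hull A"
    by (auto simp: set_plus_def)
  have "A \<subseteq> cball x 1"
    using z(2) by (auto simp: unit_ball_hull_def dist_commute)
  then have "convex hull A \<subseteq> cball x 1"
    by (intro hull_minimal convex_cball)
  then have "dist x y \<le> 1"
    using z(3) by auto
  then show "z \<in> cball 0 1"
    using z(1) by (simp add: dist_norm norm_minus_commute)
qed

lemma measure_le_cball_of_set_plus_subset:
  fixes K L :: "'a::euclidean_space set"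
  assumes K: "convex K" "bounded K" and L: "convex L" "bounded L" "L \<noteq> {}"
    and sub: "K + L \<subseteq> cball 0 1" and r: "0 \<le> r" "r \<le> 1"
    and L_eq: "measure lebesgue L = measure lebesgue (cball (0::'a) r)"
  shows "measure lebesgue K \<le> measure lebesgue (cball (0::'a) (1 - r))"
proof (cases "K = {}")
  case True
  then show ?thesis
    by simp
next
  case False
  let ?n = "DIM('a)" and ?\<kappa> = "measure lebesgue (cball (0::'a) 1)"
  have "root ?n (measure lebesgue K) + r * root ?n ?\<kappa>
      = root ?n (measure lebesgue K) + root ?n (measure lebesgue L)"
    using L_eq r measure_cball_eq[OF r(1), of "0::'a"] by (simp add: real_root_mult real_root_pos2)
  also have "\<dots> \<le> root ?n (measure lebesgue (K + L))"
    using K L False by (intro brunn_minkowski_convex)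
  also have "\<dots> \<le> root ?n ?\<kappa>"
  proof -
    have "K + L \<in> lmeasurable"
      using K L by (intro measurable_convex convex_set_plus bounded_set_plus)
    then show ?thesis
      using measure_mono_fmeasurable[OF sub fmeasurableD lmeasurable_cball] by simp
  qed
  also have "\<dots> = root ?n (measure lebesgue (cball (0::'a) (1 - r))) + r * root ?n ?\<kappa>"
    using r measure_cball_eq[of "1 - r" "0::'a"] by (simp add: real_root_mult real_root_pos2 algebra_simps)
  finally show ?thesis
    by simp
qed

theorem corollary2p4:
  fixes A :: "'a::euclidean_space set" and r :: real
  assumes "A \<noteq> {}"
    and "bounded A"
    and "outradius A \<le> 1"
    and "r \<ge> 0"
    and "measure lebesgue (cball (0::'a) r) = measure lebesgue (convex hull A)"
  shows "measure lebesgue (unit_ball_hull A) \<le> measure lebesgue (cball (0::'a) (1 - r))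
       \<and> measure lebesgue (cball (0::'a) (1 - r)) = (1 - r) ^ DIM('a) * measure lebesgue (cball (0::'a) 1)"
proof -
  have "r \<le> 1"
    using volume_radius_le_outradius[OF assms(1,2,4)] assms(3,5) by simp
  have "measure lebesgue (unit_ball_hull A) \<le> measure lebesgue (cball (0::'a) (1 - r))"
  proof (rule measure_le_cball_of_set_plus_subset)
    show "measure lebesgue (uminus ` (convex hull A)) = measure lebesgue (cball (0::'a) r)"
      using assms(5) measure_lebesgue_affine[of "-1" 0 "convex hull A"] by simp
  qed (use assms \<open>r \<le> 1\<close> unit_ball_hull_minus_convex_hull_subset in
      \<open>auto simp: convex_unit_ball_hull bounded_unit_ball_hull convex_negations bounded_convex_hull\<close>)
  moreover have "measure lebesgue (cball (0::'a) (1 - r)) = (1 - r) ^ DIM('a) * measure lebesgue (cball (0::'a) 1)"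
    using measure_cball_eq[of "1 - r" "0::'a"] \<open>r \<le> 1\<close> by simp
  ultimately show ?thesis
    by blast
qed

end
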